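(* Let $n\ge3$ be an odd integer. For $1\le r\le n-1$ let $S^r_n=\{(k,a,b)\in(\mathbb{R}\setminus A_n)\times\mathbb{R}\times\mathbb{R}: k\neq0,\ \mathrm{rank}(A^{(k,a,b)}_n)\le r,\ 4a^3+27b^2=0\}\setminus\{(k,0,0):k\in\mathbb{R}\}$. Then (a) $S^{n-1}_n=\{(k,a^{(n)}_{k,1},b^{(n)}_{k,1}): k\in\mathbb{R}\setminus A_n\}$; (b) the matrix $A^{(k,a,b)}_n$ has rank exactly $n-1$ for all but finitely many triples $(k,a,b)\in S^{n-1}_n$; (c) for each $1\le r\le n-2$, the matrix $A^{(k,a,b)}_n$ has rank $r$ for only finitely many triples $(k,a,b)\in S^{n-1}_n$.
   Context: For real $k,a,b$, the generalized $k$-FL sequence is $S^{(a,b)}_{k,0}=2b$, $S^{(a,b)}_{k,1}=bk+a$, $S^{(a,b)}_{k,m}=kS^{(a,b)}_{k,m-1}+S^{(a,b)}_{k,m-2}$. $A^{(k,a,b)}_n$ is the $n\times n$ skew circulant matrix whose $(i,j)$ entry is $S^{(a,b)}_{k,j-i+1}$ if $j\ge i$ and $-S^{(a,b)}_{k,n+j-i+1}$ if $j<i$. Define $f_m,g_m\in\mathbb{Z}[T]$ by $f_0=0,f_1=1,g_0=2,g_1=T$, $f_m=Tf_{m-1}+f_{m-2}$, $g_m=Tg_{m-1}+g_{m-2}$; $F_n=f_{n+1}-f_n$, $G_n=g_{n+1}-g_n$; $A_n=\{k\in\mathbb{R}: F_n(k)+1=0\text{ or }G_n(k)+k-2=0\}$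 (for odd $n$, $0\in A_n$). For $k\notin A_n$, the singular $k$-FL pair of level $n$ of Type 1 is $a^{(n)}_{k,1}=-\frac{27(F_n(k)+1)^2}{4(G_n(k)+k-2)^2}$, $b^{(n)}_{k,1}=\frac{27(F_n(k)+1)^3}{4(G_n(k)+k-2)^3}$. The condition $4a^3+27b^2=0$ means the curve $y^2=x^3+ax+b$ is singular. *)

theory Defs
  imports "Jordan_Normal_Form.DL_Rank" "HOL-Computational_Algebra.Polynomial"
begin

fun kFL :: "real \<Rightarrow> real \<Rightarrow> real \<Rightarrow> nat \<Rightarrow> real" where
  "kFL k a b 0 = 2 * b"
| "kFL k a b (Suc 0) = b * k + a"
| "kFL k a b (Suc (Suc m)) = k * kFL k a b (Suc m) + kFL k a b m"

text \<open>The n x n skew circulant matrix A^(k,a,b)_n (0-based indices i,j; the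
 paper's (i+1,j+1) entry).\<close>
definition skewA :: "nat \<Rightarrow> real \<Rightarrow> real \<Rightarrow> real \<Rightarrow> real mat" where
  "skewA n k a b = mat n n (\<lambda>(i,j). if i \<le> j then kFL k a b (j - i + 1)
                                     else - kFL k a b (n + j - i + 1))"

definition matrank :: "nat \<Rightarrow> real mat \<Rightarrow> nat" where
  "matrank n M = vec_space.rank n M"

fun fpol :: "nat \<Rightarrow> int poly" where
  "fpol 0 = 0"
| "fpol (Suc 0) = 1"
| "fpol (Suc (Suc m)) = [:0, 1:] * fpol (Suc m) + fpol m"

fun gpol :: "nat \<Rightarrow> int poly" where
  "gpol 0 = [:2:]"
| "gpol (Suc 0) = [:0, 1:]"
| "gpol (Suc (Suc m)) = [:0, 1:] * gpol (Suc m) + gpol m"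

definition Fpol :: "nat \<Rightarrow> int poly" where "Fpol n = fpol (Suc n) - fpol n"
definition Gpol :: "nat \<Rightarrow> int poly" where "Gpol n = gpol (Suc n) - gpol n"

definition Fn :: "nat \<Rightarrow> real \<Rightarrow> real" where "Fn n k = poly (map_poly of_int (Fpol n)) k"
definition Gn :: "nat \<Rightarrow> real \<Rightarrow> real" where "Gn n k = poly (map_poly of_int (Gpol n)) k"

definition An :: "nat \<Rightarrow> real set" where
  "An n = {k. Fn n k + 1 = 0 \<or> Gn n k + k - 2 = 0}"

definition a1 :: "nat \<Rightarrow> real \<Rightarrow> real" where
  "a1 n k = - (27 * (Fn n k + 1)^2) / (4 * (Gn n k + k - 2)^2)"
definition b1 :: "nat \<Rightarrow> real \<Rightarrow> real" where
  "b1 n k = (27 * (Fn n k + 1)^3) / (4 * (Gn n k + k - 2)^3)"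

definition Sset :: "nat \<Rightarrow> nat \<Rightarrow> (real \<times> real \<times> real) set" where
  "Sset n r = {(k,a,b). k \<notin> An n \<and> k \<noteq> 0 \<and> matrank n (skewA n k a b) \<le> r
                \<and> 4 * a^3 + 27 * b^2 = 0} - {(k,0,0) | k. True}"

end

theory Submission
  imports Defs
begin

text \<open>Let \<open>J\<close> be the skew-circulant shift, \<open>(J x)\<^sub>i = x\<^sub>i\<^sub>+\<^sub>1\<close> and \<open>(J x)\<^sub>n\<^sub>-\<^sub>1 = -x\<^sub>0\<close>. The
  recurrence of the \<open>k\<close>-FL sequence gives \<open>(I - k J - J\<^sup>2) A = c\<^sub>0 I + c\<^sub>1 J\<close> with
  \<open>c\<^sub>0 = S\<^sub>1 + S\<^sub>n\<^sub>+\<^sub>1\<close> and \<open>c\<^sub>1 = S\<^sub>0 + S\<^sub>n\<close>. For odd \<open>n\<close> and \<open>k \<noteq> 0\<close> the factor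
  \<open>I - k J - J\<^sup>2\<close> is injective: a kernel vector yields a solution of
  \<open>r\<^sub>m\<^sub>+\<^sub>2 = k r\<^sub>m\<^sub>+\<^sub>1 + r\<^sub>m\<close> returning to its initial pair after \<open>n\<close> steps, which a
  Cassini-type invariant excludes. So \<open>A\<close> and \<open>c\<^sub>0 I + c\<^sub>1 J\<close> have the same kernel. That
  kernel is trivial iff \<open>c\<^sub>0 \<noteq> c\<^sub>1\<close>, and it contains no nonzero vector vanishing at a
  coordinate unless \<open>c\<^sub>0 = c\<^sub>1 = 0\<close>, which forces \<open>a = b = 0\<close>. Hence \<open>rank A \<ge> n - 1\<close> off
  the origin, with equality iff \<open>c\<^sub>0 = c\<^sub>1\<close>, i.e. \<open>a (F\<^sub>n + 1) + b (G\<^sub>n + k - 2) = 0\<close>; this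
  line meets the cusp \<open>4 a\<^sup>3 + 27 b\<^sup>2 = 0\<close> away from the origin exactly in the Type 1 pair.
  In particular every point of \<open>S\<^sup>n\<^sup>-\<^sup>1\<^sub>n\<close> has rank exactly \<open>n - 1\<close>, so the sets in (b)
  and (c) are empty.\<close>

section \<open>The sequence in terms of the polynomials \<open>f\<^sub>m\<close> and \<open>g\<^sub>m\<close>\<close>

lemma map_poly_of_int_add:
  "map_poly (of_int :: int \<Rightarrow> 'a::ring_1) (p + q) = map_poly of_int p + map_poly of_int q"
  by (rule poly_eqI) (simp add: coeff_map_poly)

lemma map_poly_of_int_diff:
  "map_poly (of_int :: int \<Rightarrow> 'a::ring_1) (p - q) = map_poly of_int p - map_poly of_int q"
  by (rule poly_eqI) (simp add: coeff_map_poly)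

lemma poly_map_poly_of_int_const [simp]:
  "poly (map_poly (of_int :: int \<Rightarrow> 'a::comm_ring_1) [:c:]) x = of_int c"
  by (subst map_poly_pCons) simp_all

lemma poly_map_poly_of_int_X [simp]:
  "poly (map_poly (of_int :: int \<Rightarrow> 'a::comm_ring_1) [:0, 1:]) x = x"
  by (simp add: map_poly_pCons)

lemma poly_map_poly_of_int_X_mult_add:
  "poly (map_poly (of_int :: int \<Rightarrow> 'a::comm_ring_1) ([:0, 1:] * p + q)) x
     = x * poly (map_poly of_int p) x + poly (map_poly of_int q) x"
proof -
  have "[:0, 1:] * p = pCons 0 p" by simp
  then show ?thesis by (simp add: map_poly_of_int_add map_poly_pCons)
qed

lemma kFL_eq_fpol_gpol:
  "kFL k a b m = a * poly (map_poly of_int (fpol m)) k + b * poly (map_poly of_int (gpol m)) k"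
proof (induction m rule: fpol.induct)
  case (3 m)
  then show ?case
    by (simp only: kFL.simps fpol.simps gpol.simps poly_map_poly_of_int_X_mult_add)
      (simp add: algebra_simps)
qed simp_all

lemma kFL_boundary_defect:
  "(kFL k a b 1 + kFL k a b (n + 1)) - (kFL k a b 0 + kFL k a b n)
     = a * (Fn n k + 1) + b * (Gn n k + k - 2)"
  unfolding Fn_def Gn_def Fpol_def Gpol_def
  by (simp add: kFL_eq_fpol_gpol map_poly_of_int_diff algebra_simps)

lemma poly_fpol_at_0: "poly (map_poly of_int (fpol m)) (0::real) = (if odd m then 1 else 0)"
  by (induction m rule: fpol.induct) (simp_all only: fpol.simps poly_map_poly_of_int_X_mult_add, auto)

lemma zero_mem_An: "odd n \<Longrightarrow> 0 \<in> An n"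
  by (simp add: An_def Fn_def Fpol_def map_poly_of_int_diff poly_fpol_at_0)

section \<open>A Fibonacci-type recurrence\<close>

lemma kfib_cassini:
  fixes u :: "nat \<Rightarrow> 'a::comm_ring_1"
  assumes rec: "\<And>m. u (Suc (Suc m)) = k * u (Suc m) + u m"
  shows "u (Suc m)^2 - k * u m * u (Suc m) - (u m)^2
           = (-1)^m * ((u 1)^2 - k * u 0 * u 1 - (u 0)^2)"
proof (induction m)
  case (Suc m)
  have "u (Suc (Suc m))^2 - k * u (Suc m) * u (Suc (Suc m)) - (u (Suc m))^2
          = - (u (Suc m)^2 - k * u m * u (Suc m) - (u m)^2)"
    unfolding rec by (simp add: power2_eq_square algebra_simps)
  then show ?case using Suc by simp
qed simp

lemma kfib_geometric:
  fixes u :: "nat \<Rightarrow> 'a::comm_ring_1"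
  assumes rec: "\<And>m. u (Suc (Suc m)) = k * u (Suc m) + u m"
    and root: "l^2 = k * l + 1" and u1: "u 1 = l * u 0"
  shows "u m = l^m * u 0"
proof -
  have "u m = l^m * u 0 \<and> u (Suc m) = l^(Suc m) * u 0" for m
  proof (induction m)
    case 0
    show ?case using u1 by simp
  next
    case (Suc m)
    then have "u (Suc (Suc m)) = k * (l^(Suc m) * u 0) + l^m * u 0"
      by (simp only: rec)
    also have "\<dots> = l^m * (k * l + 1) * u 0" by (simp add: algebra_simps)
    also have "\<dots> = l^(Suc (Suc m)) * u 0"
      by (simp only: root[symmetric]) (simp add: power2_eq_square algebra_simps)
    finally show ?case using Suc by simp
  qed
  then show ?thesis by blast
qed

lemma kfib_zero:
  fixes u :: "nat \<Rightarrow> 'a::comm_ring_1"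
  assumes rec: "\<And>m. u (Suc (Suc m)) = k * u (Suc m) + u m" and "u 0 = 0" "u 1 = 0"
  shows "u m = 0"
proof -
  have "u m = 0 \<and> u (Suc m) = 0" for m
    by (induction m) (use assms in auto)
  then show ?thesis by simp
qed

lemma abs_eq_1_of_power_eq_1:
  fixes t :: "'a::linordered_idom"
  assumes "\<bar>t^n\<bar> = 1" "n > 0"
  shows "\<bar>t\<bar> = 1"
  using assms power_eq_imp_eq_base[of "\<bar>t\<bar>" n 1] by (simp add: power_abs)

lemma odd_power_eq_neg_one:
  fixes t :: "'a::linordered_idom"
  assumes "odd n" "t^n = -1"
  shows "t = -1"
proof -
  have "\<bar>t\<bar> = 1" using abs_eq_1_of_power_eq_1[of t n] assms by (auto intro: odd_pos)
  moreover have "t \<noteq> 1" using assms by auto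
  ultimately show ?thesis by (auto simp: abs_if split: if_splits)
qed

text \<open>For odd \<open>n\<close> the Cassini invariant of a solution changes sign after \<open>n\<close> steps, so it
  vanishes when the pair \<open>(u 0, u 1)\<close> returns up to sign; then \<open>u\<close> is geometric with a ratio
  \<open>l\<close> satisfying \<open>l\<^sup>2 = k l + 1\<close> and \<open>\<bar>l\<bar> = 1\<close>, which forces \<open>k = 0\<close>.\<close>
lemma kfib_odd_return_zero:
  fixes u :: "nat \<Rightarrow> 'a::linordered_field"
  assumes rec: "\<And>m. u (Suc (Suc m)) = k * u (Suc m) + u m"
    and "k \<noteq> 0" and "odd n" and s: "s^2 = 1"
    and un: "u n = s * u 0" and un1: "u (Suc n) = s * u 1"
  shows "u 0 = 0 \<and> u 1 = 0"
proof -
  define Q where "Q = (u 1)^2 - k * u 0 * u 1 - (u 0)^2"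
  have "(u (Suc n))^2 - k * u n * u (Suc n) - (u n)^2 = s^2 * Q"
    unfolding Q_def un un1 by (simp add: power2_eq_square algebra_simps)
  moreover have "(u (Suc n))^2 - k * u n * u (Suc n) - (u n)^2 = - Q"
    using kfib_cassini[of u k, OF rec, of n] \<open>odd n\<close> by (simp add: Q_def)
  ultimately have Q0: "Q = 0" using s by simp
  show ?thesis
  proof (cases "u 0 = 0")
    case True
    then show ?thesis using Q0 unfolding Q_def by simp
  next
    case False
    define l where "l = u 1 / u 0"
    have u1: "u 1 = l * u 0" using False by (simp add: l_def)
    have "(u 0)^2 * (l^2 - k * l - 1) = 0"
      using Q0 unfolding Q_def u1 by (simp add: power2_eq_square algebra_simps)
    then have root: "l^2 = k * l + 1" using False by simp
    have "l^n = s" using kfib_geometric[of u k l, OF rec root u1, of n] un False by simp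
    then have "\<bar>l\<bar> = 1"
      using abs_eq_1_of_power_eq_1[of l n] s \<open>odd n\<close> abs_square_eq_1 by (auto intro: odd_pos)
    then have "l^2 = 1" "l \<noteq> 0" by (auto simp: abs_square_eq_1)
    then show ?thesis using root \<open>k \<noteq> 0\<close> by simp
  qed
qed

section \<open>Skew-circulant structure\<close>

text \<open>Row \<open>i\<close> of \<open>(c\<^sub>0 I + c\<^sub>1 J) x\<close>.\<close>
definition skew_bidiag :: "nat \<Rightarrow> real \<Rightarrow> real \<Rightarrow> (nat \<Rightarrow> real) \<Rightarrow> nat \<Rightarrow> real" where
  "skew_bidiag n c0 c1 x i = c0 * x i + (if Suc i < n then c1 * x (Suc i) else - c1 * x 0)"

lemma skew_bidiag_kernel_zero_if_first_zero:
  assumes H: "\<And>i. i < n \<Longrightarrow> skew_bidiag n c0 c1 x i = 0"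
    and nz: "c0 \<noteq> 0 \<or> c1 \<noteq> 0" and x0: "x 0 = 0" and i: "i < n"
  shows "x i = 0"
proof (cases "c1 = 0")
  case True
  then show ?thesis using H[OF i] nz by (simp add: skew_bidiag_def split: if_splits)
next
  case False
  show ?thesis using i
  proof (induction i)
    case (Suc i)
    then have "c0 * x i + c1 * x (Suc i) = 0" using H[of i] by (simp add: skew_bidiag_def)
    then show ?case using Suc False by simp
  qed (use x0 in simp)
qed

text \<open>Solutions are geometric with ratio \<open>t = - c\<^sub>0 / c\<^sub>1\<close>, and closing up the cycle requires
  \<open>t\<^sup>n = -1\<close>, i.e. \<open>t = -1\<close> for odd \<open>n\<close>.\<close>
lemma skew_bidiag_kernel_trivial:
  assumes H: "\<And>i. i < n \<Longrightarrow> skew_bidiag n c0 c1 x i = 0"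
    and ne: "c0 \<noteq> c1" and n: "odd n" and i: "i < n"
  shows "x i = 0"
proof (cases "c1 = 0")
  case True
  then show ?thesis using H[OF i] ne by (simp add: skew_bidiag_def split: if_splits)
next
  case False
  define t where "t = - c0 / c1"
  have c0: "c0 = - t * c1" unfolding t_def using False by simp
  have xt: "x j = t^j * x 0" if "j < n" for j
    using that
  proof (induction j)
    case (Suc j)
    then have "c0 * x j + c1 * x (Suc j) = 0" using H[of j] by (simp add: skew_bidiag_def)
    then have "x (Suc j) = t * x j" using False unfolding c0 by (simp add: algebra_simps)
    then show ?case using Suc by simp
  qed simp
  obtain m where m: "n = Suc m" using n by (cases n) auto
  have "c0 * x m - c1 * x 0 = 0" using H[of m] by (simp add: skew_bidiag_def m)
  then have "c1 * (t^n + 1) * x 0 = 0" using xt[of m] unfolding c0 m by (simp add: algebra_simps)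
  moreover have "t^n \<noteq> -1"
  proof
    assume "t^n = -1"
    then have "t = -1" using odd_power_eq_neg_one n by blast
    then show False using ne c0 by simp
  qed
  ultimately have "x 0 = 0" using False by (simp add: add_eq_0_iff)
  then show ?thesis using xt[OF i] by simp
qed

lemma skew_bidiag_alternating:
  assumes "odd n" "i < n"
  shows "skew_bidiag n c c (\<lambda>j. (-1)^j) i = 0"
proof (cases "Suc i < n")
  case False
  then have "Suc i = n" using assms(2) by simp
  then have "even i" using assms(1) by auto
  then show ?thesis using False by (simp add: skew_bidiag_def)
qed (simp add: skew_bidiag_def)

text \<open>The antiperiodic extension to \<open>\<int>\<close> of \<open>d \<mapsto> S\<^sub>d\<^sub>+\<^sub>1\<close> (\<open>0 \<le> d < n\<close>); entry \<open>(i, j)\<close> of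
  \<open>A\<close> is its value at \<open>j - i\<close>.\<close>
definition skew_entry :: "nat \<Rightarrow> real \<Rightarrow> real \<Rightarrow> real \<Rightarrow> int \<Rightarrow> real" where
  "skew_entry n k a b d = (-1) powi (d div int n) * kFL k a b (nat (d mod int n) + 1)"

lemma skew_entry_nonneg:
  "0 \<le> d \<Longrightarrow> d < int n \<Longrightarrow> skew_entry n k a b d = kFL k a b (nat d + 1)"
  by (simp add: skew_entry_def div_pos_pos_trivial mod_pos_pos_trivial)

lemma skew_entry_add_period:
  assumes "0 < n"
  shows "skew_entry n k a b (d + int n) = - skew_entry n k a b d"
proof -
  have "(d + int n) div int n = d div int n + 1" "(d + int n) mod int n = d mod int n"
    using assms by simp_all
  then show ?thesis by (simp add: skew_entry_def power_int_add)
qed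

lemma skew_entry_neg:
  "- int n \<le> d \<Longrightarrow> d < 0 \<Longrightarrow> skew_entry n k a b d = - kFL k a b (nat (d + int n) + 1)"
  using skew_entry_add_period[of n k a b d] skew_entry_nonneg[of "d + int n" n k a b] by simp

lemma skewA_index:
  assumes "i < n" "j < n"
  shows "skewA n k a b $$ (i, j) = skew_entry n k a b (int j - int i)"
proof -
  have "i \<le> j \<Longrightarrow> nat (int j - int i) = j - i"
    and "j < i \<Longrightarrow> nat (int j - int i + int n) = n + j - i" using assms by simp_all
  then show ?thesis using assms by (auto simp: skewA_def skew_entry_nonneg skew_entry_neg)
qed

definition skewA_diag_coeff :: "nat \<Rightarrow> real \<Rightarrow> real \<Rightarrow> real \<Rightarrow> real" where
  "skewA_diag_coeff n k a b = kFL k a b 1 + kFL k a b (n + 1)"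

definition skewA_shift_coeff :: "nat \<Rightarrow> real \<Rightarrow> real \<Rightarrow> real \<Rightarrow> real" where
  "skewA_shift_coeff n k a b = kFL k a b 0 + kFL k a b n"

lemma skew_entry_defect_nonneg:
  assumes n: "3 \<le> n" and d: "0 \<le> d" "d < int n"
  shows "skew_entry n k a b d - k * skew_entry n k a b (d - 1) - skew_entry n k a b (d - 2)
    = (if d = 0 then skewA_diag_coeff n k a b else if d = 1 then skewA_shift_coeff n k a b else 0)"
proof -
  define m where "m = n - 2"
  have m: "n = Suc (Suc m)" using n by (simp add: m_def)
  consider "d = 0" | "d = 1" | "2 \<le> d" using d by linarith
  then show ?thesis
  proof cases
    case 1
    then show ?thesis using n
      by (simp add: skew_entry_nonneg skew_entry_neg skewA_diag_coeff_def m nat_add_distrib algebra_simps)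
  next
    case 2
    then show ?thesis using n
      by (simp add: skew_entry_nonneg skew_entry_neg skewA_shift_coeff_def numeral_2_eq_2 m nat_add_distrib)
  next
    case 3
    define e where "e = nat d - 2"
    have "nat d = e + 2" "nat (d - 1) = e + 1" "nat (d - 2) = e" using 3 by (simp_all add: e_def)
    then show ?thesis using 3 d by (simp add: skew_entry_nonneg numeral_2_eq_2)
  qed
qed

lemma skew_entry_defect:
  assumes n: "3 \<le> n" and d: "- int n < d" "d < int n"
  shows "skew_entry n k a b d - k * skew_entry n k a b (d - 1) - skew_entry n k a b (d - 2)
    = (if d = 0 then skewA_diag_coeff n k a b else if d = 1 then skewA_shift_coeff n k a b
       else if d = 1 - int n then - skewA_shift_coeff n k a b else 0)"
proof (cases "0 \<le> d")
  case True
  then show ?thesis using skew_entry_defect_nonneg[OF n True d(2)] n by auto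
next
  case False
  have n0: "0 < n" using n by simp
  have "skew_entry n k a b (d + int n - j) = - skew_entry n k a b (d - j)" for j
    using skew_entry_add_period[OF n0, of k a b "d - j"] by (simp add: algebra_simps)
  from this[of 0] this[of 1] this[of 2]
  have "skew_entry n k a b d - k * skew_entry n k a b (d - 1) - skew_entry n k a b (d - 2)
    = - (skew_entry n k a b (d + int n) - k * skew_entry n k a b (d + int n - 1)
         - skew_entry n k a b (d + int n - 2))"
    by simp
  then show ?thesis using skew_entry_defect_nonneg[of n "d + int n" k a b] n d False by auto
qed

text \<open>\<open>(A v)\<^sub>i\<close> for \<open>0 \<le> i < n\<close>, extended antiperiodically to all \<open>i \<in> \<int>\<close>.\<close>
definition skew_conv :: "nat \<Rightarrow> real \<Rightarrow> real \<Rightarrow> real \<Rightarrow> real vec \<Rightarrow> int \<Rightarrow> real" where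
  "skew_conv n k a b v i = (\<Sum>j<n. skew_entry n k a b (int j - i) * v $ j)"

lemma skewA_carrier: "skewA n k a b \<in> carrier_mat n n"
  by (simp add: skewA_def)

lemma skewA_mult_vec_index:
  assumes "v \<in> carrier_vec n" "i < n"
  shows "(skewA n k a b *\<^sub>v v) $ i = skew_conv n k a b v (int i)"
proof -
  have "(skewA n k a b *\<^sub>v v) $ i = (\<Sum>j<n. skewA n k a b $$ (i, j) * v $ j)"
    using assms by (simp add: scalar_prod_def atLeast0LessThan skewA_def)
  also have "\<dots> = skew_conv n k a b v (int i)"
    unfolding skew_conv_def using assms(2) by (intro sum.cong) (simp_all add: skewA_index)
  finally show ?thesis .
qed

lemma skew_conv_add_period:
  assumes "0 < n"
  shows "skew_conv n k a b v (i + int n) = - skew_conv n k a b v i"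
proof -
  have "skew_entry n k a b (int j - (i + int n)) = - skew_entry n k a b (int j - i)" for j
    using skew_entry_add_period[OF assms, of k a b "int j - (i + int n)"] by simp
  then show ?thesis by (simp add: skew_conv_def sum_negf)
qed

lemma skew_conv_defect:
  assumes n: "3 \<le> n" and i: "i < n"
  shows "skew_conv n k a b v (int i) - k * skew_conv n k a b v (int i + 1)
           - skew_conv n k a b v (int i + 2)
         = skew_bidiag n (skewA_diag_coeff n k a b) (skewA_shift_coeff n k a b) (\<lambda>j. v $ j) i"
proof -
  define c0 where "c0 = skewA_diag_coeff n k a b"
  define c1 where "c1 = skewA_shift_coeff n k a b"
  let ?E = "skew_entry n k a b"
  have summand: "(?E (int j - int i) - k * ?E (int j - int i - 1) - ?E (int j - int i - 2)) * v $ j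
      = (if j = i then c0 * v $ i else 0) + (if j = Suc i then c1 * v $ Suc i else 0)
        + (if Suc i = n \<and> j = 0 then - c1 * v $ 0 else 0)" if j: "j < n" for j
  proof -
    have "int j - int i = 1 - int n \<longleftrightarrow> Suc i = n \<and> j = 0" using i j by auto
    then show ?thesis
      using skew_entry_defect[OF n, of "int j - int i" k a b] i j n
      unfolding c0_def c1_def by auto
  qed
  have "skew_conv n k a b v (int i) - k * skew_conv n k a b v (int i + 1)
          - skew_conv n k a b v (int i + 2)
        = (\<Sum>j<n. (?E (int j - int i) - k * ?E (int j - int i - 1) - ?E (int j - int i - 2)) * v $ j)"
    by (simp add: skew_conv_def sum_subtractf sum_distrib_left algebra_simps)
  also have "\<dots> = c0 * v $ i + (if Suc i < n then c1 * v $ Suc i else 0)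
                   + (if Suc i = n then - c1 * v $ 0 else 0)"
    using i n by (simp add: summand sum.distrib)
  also have "\<dots> = skew_bidiag n c0 c1 (\<lambda>j. v $ j) i"
    using i by (auto simp: skew_bidiag_def)
  finally show ?thesis by (simp add: c0_def c1_def)
qed

lemma skewA_kernel_imp_skew_bidiag:
  assumes n: "3 \<le> n" and v: "v \<in> carrier_vec n" and Av: "skewA n k a b *\<^sub>v v = 0\<^sub>v n"
    and i: "i < n"
  shows "skew_bidiag n (skewA_diag_coeff n k a b) (skewA_shift_coeff n k a b) (\<lambda>j. v $ j) i = 0"
proof -
  have in_range: "skew_conv n k a b v (int j) = 0" if "j < n" for j
    using skewA_mult_vec_index[OF v that, of k a b] Av that by simp
  have zero: "skew_conv n k a b v (int j) = 0" if "j < n + 2" for j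
  proof (cases "j < n")
    case False
    have "skew_conv n k a b v (int j) = - skew_conv n k a b v (int (j - n))"
      using skew_conv_add_period[of n k a b v "int (j - n)"] False n by simp
    then show ?thesis using in_range[of "j - n"] that n by simp
  qed (rule in_range)
  show ?thesis
    using skew_conv_defect[OF n i, of k a b v] zero[of i] zero[of "Suc i"] zero[of "Suc (Suc i)"] i
    by (simp add: add.commute)
qed

text \<open>Conversely, \<open>(I - k J - J\<^sup>2) (A v) = 0\<close>, so \<open>r\<^sub>m = (-1)\<^sup>m (A v)\<^sub>m\<close> solves
  \<open>r\<^sub>m\<^sub>+\<^sub>2 = k r\<^sub>m\<^sub>+\<^sub>1 + r\<^sub>m\<close> and, \<open>n\<close> being odd, returns to \<open>(r\<^sub>0, r\<^sub>1)\<close> after \<open>n\<close>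
  steps, so it vanishes.\<close>
lemma skewA_kernel_if_skew_bidiag:
  assumes n: "3 \<le> n" "odd n" and k: "k \<noteq> 0" and v: "v \<in> carrier_vec n"
    and C: "\<And>i. i < n \<Longrightarrow>
      skew_bidiag n (skewA_diag_coeff n k a b) (skewA_shift_coeff n k a b) (\<lambda>j. v $ j) i = 0"
  shows "skewA n k a b *\<^sub>v v = 0\<^sub>v n"
proof -
  let ?w = "skew_conv n k a b v"
  define R where "R i = ?w i - k * ?w (i + 1) - ?w (i + 2)" for i
  have n0: "0 < n" using n by simp
  have R_period: "R (i + int n) = - R i" for i
  proof -
    have "?w (i + int n + j) = - ?w (i + j)" for j
      using skew_conv_add_period[OF n0, of k a b v "i + j"]
      by (simp only: add.assoc add.commute[of "int n" j])
    then show ?thesis unfolding R_def by (simp add: skew_conv_add_period[OF n0])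
  qed
  have R_zero: "R (int m) = 0" for m
  proof (induction m rule: less_induct)
    case (less m)
    show ?case
    proof (cases "m < n")
      case True
      then show ?thesis using skew_conv_defect[OF n(1) True, of k a b v] C unfolding R_def by simp
    next
      case False
      then have "R (int m) = - R (int (m - n))" using R_period[of "int (m - n)"] by simp
      then show ?thesis using less.IH[of "m - n"] False n0 by simp
    qed
  qed
  define r where "r m = (-1)^m * ?w (int m)" for m
  have rec: "r (Suc (Suc m)) = k * r (Suc m) + r m" for m
    using R_zero[of m] unfolding R_def r_def by (simp add: algebra_simps)
  have "r n = 1 * r 0" "r (Suc n) = 1 * r 1"
    using skew_conv_add_period[OF n0, of k a b v 0] skew_conv_add_period[OF n0, of k a b v 1] n(2)
    by (simp_all add: r_def add.commute)
  then have "r 0 = 0 \<and> r 1 = 0" using kfib_odd_return_zero[of r k n 1, OF rec k n(2)] by simp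
  then have "r m = 0" for m using kfib_zero[of r k, OF rec] by simp
  then have "?w (int i) = 0" for i unfolding r_def by simp
  then show ?thesis
    using skewA_mult_vec_index[OF v] by (intro eq_vecI) (simp_all add: skewA_def)
qed

lemma skewA_coeffs_not_both_zero:
  assumes "odd n" and "k \<noteq> 0" and "a \<noteq> 0 \<or> b \<noteq> 0"
  shows "skewA_diag_coeff n k a b \<noteq> 0 \<or> skewA_shift_coeff n k a b \<noteq> 0"
proof (rule ccontr)
  assume "\<not> ?thesis"
  then have "kFL k a b n = -1 * kFL k a b 0" "kFL k a b (Suc n) = -1 * kFL k a b 1"
    by (simp_all add: skewA_diag_coeff_def skewA_shift_coeff_def eq_neg_iff_add_eq_0)
  then have "kFL k a b 0 = 0 \<and> kFL k a b 1 = 0"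
    by (intro kfib_odd_return_zero[where u = "kFL k a b" and s = "-1"]) (use assms(1,2) in simp_all)
  then show False using assms(3) by auto
qed

section \<open>Rank\<close>

lemma (in vec_space) rank_eq_full_iff_kernel_trivial:
  assumes "A \<in> carrier_mat n n"
  shows "rank A = n \<longleftrightarrow> (\<forall>v \<in> carrier_vec n. A *\<^sub>v v = 0\<^sub>v n \<longrightarrow> v = 0\<^sub>v n)"
  using det_rank_iff[OF assms] det_0_iff_vec_prod_zero_field[OF assms] by blast

lemma (in vec_space) rank_ge_of_injective_submatrix:
  assumes A: "A \<in> carrier_mat n nc" and B: "B \<in> carrier_mat n m"
    and sub: "set (cols B) \<subseteq> set (cols A)"
    and inj: "\<And>w. w \<in> carrier_vec m \<Longrightarrow> B *\<^sub>v w = 0\<^sub>v n \<Longrightarrow> w = 0\<^sub>v m"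
  shows "m \<le> rank A"
proof -
  have distinct: "distinct (cols B)"
  proof (rule ccontr)
    assume "\<not> distinct (cols B)"
    then obtain i j where ij: "i \<noteq> j" "i < m" "j < m" "col B i = col B j"
      using B by (auto simp: distinct_conv_nth)
    define w where "w = vec m (\<lambda>l. if l = i then 1 else if l = j then -1 else (0 :: 'a))"
    have w: "w \<in> carrier_vec m" by (simp add: w_def)
    have "B *\<^sub>v w = 0\<^sub>v n"
    proof (rule eq_vecI)
      fix r assume "r < dim_vec (0\<^sub>v n :: 'a vec)"
      then have r: "r < n" by simp
      have "(B *\<^sub>v w) $ r = (\<Sum>l<m. B $$ (r, l) * w $ l)"
        using w r B by (simp add: scalar_prod_def atLeast0LessThan)
      also have "\<dots> = (\<Sum>l<m. (if l = i then B $$ (r, l) else 0) + (if l = j then - B $$ (r, l) else 0))"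
        using ij(1) by (intro sum.cong) (auto simp: w_def)
      also have "\<dots> = B $$ (r, i) - B $$ (r, j)" using ij(1-3) by (simp add: sum.distrib)
      also have "\<dots> = col B i $ r - col B j $ r" using ij(2,3) r B by simp
      also have "\<dots> = 0" using ij(4) by simp
      finally show "(B *\<^sub>v w) $ r = 0\<^sub>v n $ r" using r by simp
    qed (use B in simp)
    then have "w $ i = 0" using inj[OF w] ij by simp
    then show False using ij by (simp add: w_def)
  qed
  have "lin_indpt (set (cols B))"
  proof
    assume "lin_dep (set (cols B))"
    then obtain w where "w \<in> carrier_vec m" "w \<noteq> 0\<^sub>v m" "B *\<^sub>v w = 0\<^sub>v n"
      using lin_depE[OF B _ distinct] by blast
    then show False using inj by blast
  qed
  then have "card (set (cols B)) \<le> rank A"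
    using rank_ge_card_indpt[OF A sub] by blast
  then show ?thesis using distinct B by (simp add: distinct_card)
qed

text \<open>The columns \<open>1, \<dots>, nc - 1\<close> of \<open>A\<close> are independent as soon as no nonzero kernel vector
  vanishes at coordinate \<open>0\<close>.\<close>
lemma (in vec_space) rank_ge_pred_if_kernel_nonzero_at_0:
  assumes A: "A \<in> carrier_mat n nc"
    and H: "\<And>v. v \<in> carrier_vec nc \<Longrightarrow> A *\<^sub>v v = 0\<^sub>v n \<Longrightarrow> v $ 0 = 0 \<Longrightarrow> v = 0\<^sub>v nc"
  shows "nc - 1 \<le> rank A"
proof (cases nc)
  case (Suc m)
  define B where "B = mat n m (\<lambda>(i, j). A $$ (i, Suc j))"
  have B: "B \<in> carrier_mat n m" by (simp add: B_def)
  have sub: "set (cols B) \<subseteq> set (cols A)"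
  proof
    fix x assume "x \<in> set (cols B)"
    then obtain j where j: "j < m" "x = col B j" using B by (auto simp: cols_def)
    then have "x = col A (Suc j)" using A Suc by (intro eq_vecI) (auto simp: B_def)
    then show "x \<in> set (cols A)"
      unfolding cols_def set_map using j(1) A Suc by (intro image_eqI[of _ _ "Suc j"]) auto
  qed
  have "w = 0\<^sub>v m" if w: "w \<in> carrier_vec m" "B *\<^sub>v w = 0\<^sub>v n" for w
  proof -
    define v where "v = vec nc (\<lambda>i. if i = 0 then 0 else w $ (i - 1))"
    have v: "v \<in> carrier_vec nc" by (simp add: v_def)
    have "A *\<^sub>v v = B *\<^sub>v w"
    proof (rule eq_vecI)
      fix i assume "i < dim_vec (B *\<^sub>v w)"
      then have i: "i < n" using B by simp
      have "(A *\<^sub>v v) $ i = (\<Sum>j<Suc m. A $$ (i, j) * v $ j)"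
        using A v i Suc by (simp add: scalar_prod_def atLeast0LessThan)
      also have "\<dots> = (\<Sum>j<m. A $$ (i, Suc j) * w $ j)"
        unfolding sum.lessThan_Suc_shift using Suc by (auto simp: v_def intro!: sum.cong)
      also have "\<dots> = (B *\<^sub>v w) $ i"
        using w(1) i by (simp add: scalar_prod_def atLeast0LessThan B_def)
      finally show "(A *\<^sub>v v) $ i = (B *\<^sub>v w) $ i" .
    qed (use A B in simp)
    then have "v = 0\<^sub>v nc" using H[OF v] w(2) Suc by (simp add: v_def)
    moreover have "w $ j = v $ Suc j" if "j < m" for j
      using that Suc by (simp add: v_def)
    ultimately have "w $ j = 0" if "j < m" for j
      using that Suc by simp
    then show ?thesis using w(1) by (intro eq_vecI) auto
  qed
  then show ?thesis using rank_ge_of_injective_submatrix[OF A B sub] Suc by simp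
qed simp

lemma rank_skewA_eq_n_iff:
  assumes n: "3 \<le> n" "odd n" and k: "k \<noteq> 0"
  shows "matrank n (skewA n k a b) = n \<longleftrightarrow> skewA_diag_coeff n k a b \<noteq> skewA_shift_coeff n k a b"
proof -
  let ?A = "skewA n k a b"
  let ?c0 = "skewA_diag_coeff n k a b" and ?c1 = "skewA_shift_coeff n k a b"
  have "(\<forall>v \<in> carrier_vec n. ?A *\<^sub>v v = 0\<^sub>v n \<longrightarrow> v = 0\<^sub>v n) \<longleftrightarrow> ?c0 \<noteq> ?c1"
  proof
    assume trivial: "\<forall>v \<in> carrier_vec n. ?A *\<^sub>v v = 0\<^sub>v n \<longrightarrow> v = 0\<^sub>v n"
    show "?c0 \<noteq> ?c1"
    proof
      assume eq: "?c0 = ?c1"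
      define v :: "real vec" where "v = vec n (\<lambda>i. (-1)^i)"
      have v: "v \<in> carrier_vec n" by (simp add: v_def)
      have "skew_bidiag n ?c0 ?c1 (\<lambda>j. v $ j) i = 0" if "i < n" for i
      proof -
        have "skew_bidiag n ?c0 ?c1 (\<lambda>j. v $ j) i = skew_bidiag n ?c1 ?c1 (\<lambda>j. (-1)^j) i"
          using eq that n by (simp add: skew_bidiag_def v_def)
        then show ?thesis using skew_bidiag_alternating[OF n(2) that] by simp
      qed
      then have "?A *\<^sub>v v = 0\<^sub>v n" by (rule skewA_kernel_if_skew_bidiag[OF n k v])
      then have "v = 0\<^sub>v n" using trivial v by blast
      then have "v $ 0 = 0" using n by simp
      then show False using n by (simp add: v_def)
    qed
  next
    assume "?c0 \<noteq> ?c1"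
    show "\<forall>v \<in> carrier_vec n. ?A *\<^sub>v v = 0\<^sub>v n \<longrightarrow> v = 0\<^sub>v n"
    proof (intro ballI impI)
      fix v assume v: "v \<in> carrier_vec n" and Av: "?A *\<^sub>v v = 0\<^sub>v n"
      have "v $ i = 0" if "i < n" for i
        using skew_bidiag_kernel_trivial[OF skewA_kernel_imp_skew_bidiag[OF n(1) v Av]
            \<open>?c0 \<noteq> ?c1\<close> n(2) that] .
      then show "v = 0\<^sub>v n" using v by (intro eq_vecI) auto
    qed
  qed
  then show ?thesis
    unfolding matrank_def using vec_space.rank_eq_full_iff_kernel_trivial[OF skewA_carrier] by simp
qed

lemma rank_skewA_ge:
  assumes n: "3 \<le> n" "odd n" and k: "k \<noteq> 0" and ab: "a \<noteq> 0 \<or> b \<noteq> 0"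
  shows "n - 1 \<le> matrank n (skewA n k a b)"
  unfolding matrank_def
proof (rule vec_space.rank_ge_pred_if_kernel_nonzero_at_0[OF skewA_carrier])
  fix v assume v: "v \<in> carrier_vec n" "skewA n k a b *\<^sub>v v = 0\<^sub>v n" "v $ 0 = 0"
  have "v $ i = 0" if "i < n" for i
    using skew_bidiag_kernel_zero_if_first_zero[OF _ skewA_coeffs_not_both_zero[OF n(2) k ab] _ that]
      skewA_kernel_imp_skew_bidiag[OF n(1) v(1,2)] v(3) by blast
  then show "v = 0\<^sub>v n" using v(1) by (intro eq_vecI) auto
qed

section \<open>Singular pairs\<close>

lemma singular_on_line_iff:
  fixes \<alpha> \<beta> a b :: "'a::field_char_0"
  assumes \<alpha>: "\<alpha> \<noteq> 0" and \<beta>: "\<beta> \<noteq> 0"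
  shows "(a * \<alpha> + b * \<beta> = 0 \<and> 4 * a^3 + 27 * b^2 = 0 \<and> (a \<noteq> 0 \<or> b \<noteq> 0)) \<longleftrightarrow>
         (a = - (27 * \<alpha>^2) / (4 * \<beta>^2) \<and> b = 27 * \<alpha>^3 / (4 * \<beta>^3))"
proof
  assume h: "a * \<alpha> + b * \<beta> = 0 \<and> 4 * a^3 + 27 * b^2 = 0 \<and> (a \<noteq> 0 \<or> b \<noteq> 0)"
  then have "b * \<beta> = - (a * \<alpha>)" by (simp add: eq_neg_iff_add_eq_0 add.commute)
  then have b: "b = - a * \<alpha> / \<beta>" using \<beta> by (simp add: field_simps)
  have "a \<noteq> 0" using h b by auto
  have "a^2 * (4 * a + 27 * \<alpha>^2 / \<beta>^2) = 0"
    using h unfolding b by (simp add: power2_eq_square power3_eq_cube field_simps)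
  then have "4 * a + 27 * \<alpha>^2 / \<beta>^2 = 0" using \<open>a \<noteq> 0\<close> by simp
  then have a: "a = - (27 * \<alpha>^2) / (4 * \<beta>^2)"
    using \<beta> by (simp add: field_simps eq_neg_iff_add_eq_0)
  then have "b = 27 * \<alpha>^3 / (4 * \<beta>^3)"
    unfolding b using \<beta> by (simp add: field_simps power2_eq_square power3_eq_cube)
  then show "a = - (27 * \<alpha>^2) / (4 * \<beta>^2) \<and> b = 27 * \<alpha>^3 / (4 * \<beta>^3)" using a by simp
next
  assume "a = - (27 * \<alpha>^2) / (4 * \<beta>^2) \<and> b = 27 * \<alpha>^3 / (4 * \<beta>^3)"
  then have a: "a = - (27 * \<alpha>^2) / (4 * \<beta>^2)" and b: "b = 27 * \<alpha>^3 / (4 * \<beta>^3)"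
    by simp_all
  have "a * \<alpha> + b * \<beta> = 0" "4 * a^3 + 27 * b^2 = 0" "a \<noteq> 0"
    unfolding a b using \<alpha> \<beta> by (simp_all add: field_simps power2_eq_square power3_eq_cube)
  then show "a * \<alpha> + b * \<beta> = 0 \<and> 4 * a^3 + 27 * b^2 = 0 \<and> (a \<noteq> 0 \<or> b \<noteq> 0)" by simp
qed

lemma rank_skewA_le_pred_iff:
  assumes n: "3 \<le> n" "odd n" and k: "k \<noteq> 0"
  shows "matrank n (skewA n k a b) \<le> n - 1 \<longleftrightarrow> a * (Fn n k + 1) + b * (Gn n k + k - 2) = 0"
proof -
  have "matrank n (skewA n k a b) \<le> n"
    unfolding matrank_def using vec_space.rank_le_nc[OF skewA_carrier] by blast
  then have "matrank n (skewA n k a b) \<le> n - 1 \<longleftrightarrow> matrank n (skewA n k a b) \<noteq> n"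
    using n by auto
  then show ?thesis
    using rank_skewA_eq_n_iff[OF n k, of a b] kFL_boundary_defect[of k a b n]
    unfolding skewA_diag_coeff_def skewA_shift_coeff_def by linarith
qed

lemma mem_Sset_pred_iff:
  assumes n: "3 \<le> n" "odd n"
  shows "(k, a, b) \<in> Sset n (n - 1) \<longleftrightarrow> k \<notin> An n \<and> a = a1 n k \<and> b = b1 n k"
proof (cases "k \<in> An n")
  case False
  then have k: "k \<noteq> 0" using zero_mem_An[OF n(2)] by auto
  have "Fn n k + 1 \<noteq> 0" "Gn n k + k - 2 \<noteq> 0" using False by (auto simp: An_def)
  note singular = singular_on_line_iff[OF this, of a b]
  have "(k, a, b) \<in> Sset n (n - 1) \<longleftrightarrow>
      matrank n (skewA n k a b) \<le> n - 1 \<and> 4 * a^3 + 27 * b^2 = 0 \<and> (a \<noteq> 0 \<or> b \<noteq> 0)"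
    using False k by (auto simp: Sset_def)
  also have "\<dots> \<longleftrightarrow> a = a1 n k \<and> b = b1 n k"
    unfolding rank_skewA_le_pred_iff[OF n k] a1_def b1_def using singular by simp
  finally show ?thesis using False by simp
qed (simp add: Sset_def)

lemma rank_skewA_eq_pred_if_mem_Sset:
  assumes n: "3 \<le> n" "odd n" and mem: "(k, a, b) \<in> Sset n (n - 1)"
  shows "matrank n (skewA n k a b) = n - 1"
proof -
  have "k \<noteq> 0" "a \<noteq> 0 \<or> b \<noteq> 0" "matrank n (skewA n k a b) \<le> n - 1"
    using mem by (auto simp: Sset_def)
  then show ?thesis using rank_skewA_ge[OF n] by (simp add: le_antisym)
qed

theorem theorem4p11:
  fixes n :: nat
  assumes "odd n" and "n \<ge> 3"
  shows "Sset n (n - 1) = {(k, a1 n k, b1 n k) | k. k \<notin> An n}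
    \<and> finite {(k,a,b) \<in> Sset n (n - 1). matrank n (skewA n k a b) \<noteq> n - 1}
    \<and> (\<forall>r. 1 \<le> r \<and> r \<le> n - 2 \<longrightarrow>
           finite {(k,a,b) \<in> Sset n (n - 1). matrank n (skewA n k a b) = r})"
proof -
  note n = \<open>n \<ge> 3\<close> \<open>odd n\<close>
  have Sset_eq: "Sset n (n - 1) = {(k, a1 n k, b1 n k) | k. k \<notin> An n}"
    using mem_Sset_pred_iff[OF n] by auto
  have rank_ne_empty: "{(k,a,b) \<in> Sset n (n - 1). matrank n (skewA n k a b) \<noteq> n - 1} = {}"
    using rank_skewA_eq_pred_if_mem_Sset[OF n] by auto
  have rank_eq_empty: "{(k,a,b) \<in> Sset n (n - 1). matrank n (skewA n k a b) = r} = {}" if "r \<le> n - 2" for r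
    using rank_skewA_eq_pred_if_mem_Sset[OF n] that n by fastforce
  show ?thesis
    by (intro conjI allI impI Sset_eq) (simp_all only: rank_ne_empty rank_eq_empty finite.emptyI)
qed

end
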